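(* Let $F:\mathbb{R}^n\to\mathbb{R}$ be convex and $1$-smooth, let $x^\star$ be a minimizer of $F$ and $F^\star=F(x^\star)$. Let $k\ge1$, $N=2^k-1$, and let $(h_0,\dots,h_{N-1})=\pi_k$ be the silver stepsize schedule. For $x^0\in\mathbb{R}^n$ and $x^{i+1}=x^i-h_i\nabla F(x^i)$, $i=0,\dots,N-1$, we have $$F(x^N)-F^\star\le\frac{1}{4\rho^k-2}\,\|x^0-x^\star\|^2,$$ where $\rho=1+\sqrt2$.
   Context: A differentiable convex function $F$ is $1$-smooth if $\nabla F$ is $1$-Lipschitz. The silver ratio is $\rho=1+\sqrt2$. The silver stepsize schedule $\pi_k\in\mathbb{R}^{2^k-1}$ is defined recursively by $\pi_1=(\sqrt2)$ and $\pi_{k+1}=(\pi_k,\ 1+\rho^{k-1},\ \pi_k)$ (concatenation). *)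

theory Defs
  imports "HOL-Analysis.Analysis"
begin

definition silver_ratio :: real where
  "silver_ratio = 1 + sqrt 2"

text \<open>Silver stepsize schedule pi_k, of length 2^k - 1 (pi_0 is unused, set to the empty list).\<close>
fun silver_sched :: "nat \<Rightarrow> real list" where
  "silver_sched 0 = []"
| "silver_sched (Suc 0) = [sqrt 2]"
| "silver_sched (Suc (Suc k)) =
     silver_sched (Suc k) @ [1 + silver_ratio ^ k] @ silver_sched (Suc k)"

end

theory Submission
  imports Defs
begin

text \<open>
  For convex 1-smooth F, co-coercivity makes
  Q(u, v) = F u - F v - <grad F v, u - v> - |grad F u - grad F v|^2 / 2
  nonnegative for all u and v. Along a run x_0, ..., x_N of the silver schedule pi_k the
  potential E_k(y) (silver_potential with S = rho^k - 1) is nonnegative for every y: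
  for k = 1 it is a nonnegative combination of three values of Q, and since
  pi_(k+1) = (pi_k, 1 + rho^(k-1), pi_k), the potential of the glued run is, by an exact algebraic
  identity resting on rho^2 = 2 rho + 1, a nonnegative combination of values of Q, of the
  potential of the first half at y, and of the potential of the second half at y, at the
  middle iterate and at the last iterate.
  At y = x*, where the gradient vanishes, one more value of Q and a completed square give
  (1 + 2 S) (F x_N - F x*) <= |x_0 - x*|^2 / 2, and 2 (1 + 2 S) = 4 rho^k - 2.
\<close>

lemma has_real_derivative_along_line:
  fixes G :: "'a::real_inner \<Rightarrow> real"
  assumes der: "\<And>y. (G has_derivative (\<lambda>h. D y \<bullet> h)) (at y)"
  shows "((\<lambda>t. G (v + t *\<^sub>R d)) has_real_derivative D (v + t *\<^sub>R d) \<bullet> d) (at t)"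
proof -
  have "((\<lambda>t. v + t *\<^sub>R d) has_derivative (\<lambda>s. s *\<^sub>R d)) (at t)"
    by (auto intro!: derivative_eq_intros)
  from has_derivative_compose[OF this der]
  have "((\<lambda>t. G (v + t *\<^sub>R d)) has_derivative (\<lambda>s. D (v + t *\<^sub>R d) \<bullet> (s *\<^sub>R d))) (at t)" .
  moreover have "(\<lambda>s. D (v + t *\<^sub>R d) \<bullet> (s *\<^sub>R d)) = (*) (D (v + t *\<^sub>R d) \<bullet> d)"
    by (auto simp: fun_eq_iff)
  ultimately show ?thesis
    unfolding has_field_derivative_def by simp
qed

lemma lipschitz_gradient_upper_bound:
  fixes G :: "'a::real_inner \<Rightarrow> real"
  assumes der: "\<And>y. (G has_derivative (\<lambda>h. D y \<bullet> h)) (at y)"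
    and lip: "\<And>y z. norm (D y - D z) \<le> norm (y - z)"
  shows "G u \<le> G v + D v \<bullet> (u - v) + (norm (u - v))\<^sup>2 / 2"
proof -
  define d where "d = u - v"
  define \<phi> where "\<phi> t = G (v + t *\<^sub>R d) - t * (D v \<bullet> d) - t\<^sup>2 / 2 * (norm d)\<^sup>2" for t
  have \<phi>_deriv: "(\<phi> has_real_derivative D (v + t *\<^sub>R d) \<bullet> d - D v \<bullet> d - t * (norm d)\<^sup>2) (at t)"
    for t
    unfolding \<phi>_def
    by (rule derivative_eq_intros has_real_derivative_along_line[OF der] | simp)+
  have "\<phi> 1 \<le> \<phi> 0"
  proof (rule DERIV_nonpos_imp_nonincreasing[of 0 1])
    fix t :: real
    assume t: "0 \<le> t" "t \<le> 1"
    have "D (v + t *\<^sub>R d) \<bullet> d - D v \<bullet> d \<le> norm (D (v + t *\<^sub>R d) - D v) * norm d"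
      using norm_cauchy_schwarz[of "D (v + t *\<^sub>R d) - D v" d] by (simp add: inner_diff_left)
    also have "\<dots> \<le> norm (t *\<^sub>R d) * norm d"
      using lip[of "v + t *\<^sub>R d" v] by (simp add: mult_right_mono)
    also have "\<dots> = t * (norm d)\<^sup>2"
      using t by (simp add: power2_eq_square)
    finally show "\<exists>y. (\<phi> has_real_derivative y) (at t) \<and> y \<le> 0"
      using \<phi>_deriv by force
  qed simp
  then show ?thesis
    unfolding \<phi>_def d_def by simp
qed

lemma convex_gradient_lower_bound:
  fixes G :: "'a::real_inner \<Rightarrow> real"
  assumes der: "\<And>y. (G has_derivative (\<lambda>h. D y \<bullet> h)) (at y)"
    and cvx: "convex_on UNIV G"
  shows "G v + D v \<bullet> (u - v) \<le> G u"
proof -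
  define d where "d = u - v"
  define \<phi> where "\<phi> t = G (v + t *\<^sub>R d)" for t
  have "convex_on UNIV \<phi>"
  proof (rule convex_onI)
    fix s a b :: real
    assume s: "0 < s" "s < 1"
    have "v + ((1 - s) *\<^sub>R a + s *\<^sub>R b) *\<^sub>R d = (1 - s) *\<^sub>R (v + a *\<^sub>R d) + s *\<^sub>R (v + b *\<^sub>R d)"
      by (simp add: algebra_simps)
    then show "\<phi> ((1 - s) *\<^sub>R a + s *\<^sub>R b) \<le> (1 - s) * \<phi> a + s * \<phi> b"
      unfolding \<phi>_def using convex_onD[OF cvx, of s "v + a *\<^sub>R d" "v + b *\<^sub>R d"] s by simp
  qed simp
  moreover have "(\<phi> has_real_derivative D v \<bullet> d) (at 0 within UNIV)"
    using has_real_derivative_along_line[OF der, of v d 0] unfolding \<phi>_def by simp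
  ultimately have "D v \<bullet> d \<le> \<phi> 1 - \<phi> 0"
    using convex_on_imp_above_tangent[of UNIV \<phi> 0 1] by simp
  then show ?thesis
    unfolding \<phi>_def d_def by simp
qed

text \<open>
  Tilting G by the linear function D v moves its minimum to v; the upper bound at the gradient
  step from u then bounds the tilted function from below by its value at v.
\<close>
lemma convex_lipschitz_gradient_cocoercive:
  fixes G :: "'a::real_inner \<Rightarrow> real"
  assumes der: "\<And>y. (G has_derivative (\<lambda>h. D y \<bullet> h)) (at y)"
    and cvx: "convex_on UNIV G"
    and lip: "\<And>y z. norm (D y - D z) \<le> norm (y - z)"
  shows "G v + D v \<bullet> (u - v) + (norm (D u - D v))\<^sup>2 / 2 \<le> G u"
proof -
  define H where "H z = G z - D v \<bullet> z" for z
  define DH where "DH z = D z - D v" for z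
  have H_deriv: "(H has_derivative (\<lambda>h. DH y \<bullet> h)) (at y)" for y
  proof -
    have "(H has_derivative (\<lambda>h. D y \<bullet> h - D v \<bullet> h)) (at y)"
      unfolding H_def
      by (intro has_derivative_diff der bounded_linear_imp_has_derivative bounded_linear_inner_right)
    then show ?thesis
      unfolding DH_def by (simp add: inner_diff_left)
  qed
  have DH_lip: "norm (DH y - DH z) \<le> norm (y - z)" for y z
    unfolding DH_def using lip[of y z] by simp
  let ?w = "u - DH u"
  have "H ?w \<le> H u + DH u \<bullet> (?w - u) + (norm (?w - u))\<^sup>2 / 2"
    by (rule lipschitz_gradient_upper_bound[OF H_deriv DH_lip])
  also have "\<dots> = H u - (norm (DH u))\<^sup>2 / 2"
    by (simp add: power2_norm_eq_inner)
  finally have "H ?w \<le> H u - (norm (DH u))\<^sup>2 / 2" .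
  moreover have "H v \<le> H ?w"
    using convex_gradient_lower_bound[OF der cvx, of v ?w] unfolding H_def
    by (simp add: inner_diff_right)
  ultimately show ?thesis
    unfolding H_def DH_def by (simp add: inner_diff_right)
qed

lemma gradient_zero_at_minimum:
  fixes G :: "'a::real_inner \<Rightarrow> real"
  assumes der: "\<And>y. (G has_derivative (\<lambda>h. D y \<bullet> h)) (at y)"
    and min: "\<And>y. G z \<le> G y"
  shows "D z = 0"
proof -
  have "(\<lambda>h. D z \<bullet> h) = (\<lambda>h. 0)"
    by (rule has_derivative_local_min[OF der]) (simp add: min always_eventually)
  then have "D z \<bullet> D z = 0"
    by meson
  then show ?thesis
    by simp
qed

definition cocoercivity_gap :: "('a::real_inner \<Rightarrow> real) \<Rightarrow> ('a \<Rightarrow> 'a) \<Rightarrow> 'a \<Rightarrow> 'a \<Rightarrow> real"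
  where "cocoercivity_gap F g u v = F u - F v - g v \<bullet> (u - v) - (norm (g u - g v))\<^sup>2 / 2"

text \<open>
  S is the total step size of the run from x0 to xN (rho^k - 1 for pi_k), and y an arbitrary
  comparison point.
\<close>
definition silver_potential ::
    "('a::real_inner \<Rightarrow> real) \<Rightarrow> ('a \<Rightarrow> 'a) \<Rightarrow> real \<Rightarrow> 'a \<Rightarrow> 'a \<Rightarrow> 'a \<Rightarrow> real"
  where "silver_potential F g S x0 xN y =
    (norm (x0 - y))\<^sup>2 / 2 - (norm (xN - y))\<^sup>2 / 2 - S * (F xN - F y)
    - S * (1 + S) / 2 * (norm (g xN))\<^sup>2 - S / 2 * (norm (g y))\<^sup>2 + g y \<bullet> (x0 - xN)"

lemma silver_potential_base:
  fixes F :: "'a::real_inner \<Rightarrow> real" and g :: "'a \<Rightarrow> 'a" and r :: real and x0 :: 'a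
  assumes r: "r * r = 2"
  defines "x1 \<equiv> x0 - r *\<^sub>R g x0"
  shows "silver_potential F g r x0 x1 y =
           r * cocoercivity_gap F g y x0 + (1 + r) * cocoercivity_gap F g x0 x1
           + cocoercivity_gap F g x1 x0"
proof -
  have rr: "\<And>X. r * (r * X) = 2 * X"
    using r by (metis mult.assoc)
  show ?thesis
    unfolding cocoercivity_gap_def silver_potential_def x1_def
    by (simp add: power2_norm_eq_inner inner_commute algebra_simps rr) (simp add: field_simps)
qed

lemma silver_potential_join:
  fixes F :: "'a::real_inner \<Rightarrow> real" and g :: "'a \<Rightarrow> 'a" and t :: real and xn :: 'a
  assumes \<rho>: "\<rho> * \<rho> = 2 * \<rho> + 1"
  defines "x' \<equiv> xn - (1 + t) *\<^sub>R g xn"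
  shows "silver_potential F g (\<rho> * \<rho> * t - 1) x0 xm y =
           silver_potential F g (\<rho> * t - 1) x0 xn y + silver_potential F g (\<rho> * t - 1) x' xm y
           + (1 + t) * cocoercivity_gap F g y xn + \<rho> * cocoercivity_gap F g xn xm
           + \<rho> * t * cocoercivity_gap F g xm xn
           + \<rho> * silver_potential F g (\<rho> * t - 1) x' xm xn
           + \<rho> * silver_potential F g (\<rho> * t - 1) x' xm xm"
proof -
  have \<rho>\<rho>: "\<And>X. \<rho> * (\<rho> * X) = 2 * (\<rho> * X) + X"
    using \<rho> by (metis mult.assoc distrib_right mult_1)
  show ?thesis
    unfolding cocoercivity_gap_def silver_potential_def x'_def
    by (simp add: power2_norm_eq_inner inner_commute algebra_simps \<rho>\<rho>) (simp add: field_simps)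
qed

lemma silver_potential_rate:
  fixes F :: "'a::real_inner \<Rightarrow> real"
  assumes E: "0 \<le> silver_potential F g S x0 xN xstar"
    and Q: "0 \<le> cocoercivity_gap F g xstar xN"
    and stationary: "g xstar = 0"
    and S: "0 \<le> S"
  shows "(1 + 2 * S) * (F xN - F xstar) \<le> (norm (x0 - xstar))\<^sup>2 / 2"
proof -
  have "(1 + 2 * S) * (F xN - F xstar) =
          (norm (x0 - xstar))\<^sup>2 / 2 - silver_potential F g S x0 xN xstar
          - (1 + S) * cocoercivity_gap F g xstar xN
          - (norm (xN - xstar - (1 + S) *\<^sub>R g xN))\<^sup>2 / 2"
    unfolding cocoercivity_gap_def silver_potential_def stationary
    by (simp add: power2_norm_eq_inner inner_commute algebra_simps) (simp add: field_simps)
  moreover have "0 \<le> (1 + S) * cocoercivity_gap F g xstar xN"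
    using Q S by simp
  ultimately show ?thesis
    using E zero_le_power2[of "norm (xN - xstar - (1 + S) *\<^sub>R g xN)"] by linarith
qed

definition gd_trajectory :: "('a::real_vector \<Rightarrow> 'a) \<Rightarrow> real list \<Rightarrow> (nat \<Rightarrow> 'a) \<Rightarrow> bool"
  where "gd_trajectory g hs x \<longleftrightarrow> (\<forall>i < length hs. x (Suc i) = x i - hs ! i *\<^sub>R g (x i))"

lemma gd_trajectory_append:
  "gd_trajectory g (hs @ hs') x \<longleftrightarrow>
     gd_trajectory g hs x \<and> gd_trajectory g hs' (\<lambda>i. x (length hs + i))"
proof -
  have "(\<forall>i < length hs + length hs'. P i) \<longleftrightarrow>
          (\<forall>i < length hs. P i) \<and> (\<forall>i < length hs'. P (length hs + i))" for P
    by (auto, metis add_diff_inverse_nat nat_add_left_cancel_less)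
  then show ?thesis
    unfolding gd_trajectory_def by (simp add: nth_append)
qed

lemma length_silver_sched: "length (silver_sched k) = 2 ^ k - 1"
proof (induction k rule: silver_sched.induct)
  case (3 k)
  have "(2::nat) ^ Suc k \<ge> 1"
    by simp
  with 3 show ?case
    by simp
qed simp_all

lemma silver_ratio_sq: "silver_ratio * silver_ratio = 2 * silver_ratio + 1"
  unfolding silver_ratio_def by (simp add: algebra_simps)

lemma silver_ratio_pos: "0 < silver_ratio"
  unfolding silver_ratio_def by (simp add: add_pos_nonneg)

lemma silver_potential_nonneg:
  assumes Q: "\<And>u v. 0 \<le> cocoercivity_gap F g u v"
    and "k \<ge> 1"
    and "gd_trajectory g (silver_sched k) x"
  shows "0 \<le> silver_potential F g (silver_ratio ^ k - 1) (x 0) (x (length (silver_sched k))) y"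
  using assms(2,3)
proof (induction k arbitrary: x y rule: silver_sched.induct)
  case 2
  then have x1: "x 1 = x 0 - sqrt 2 *\<^sub>R g (x 0)"
    by (simp add: gd_trajectory_def)
  have "silver_potential F g (sqrt 2) (x 0) (x 1) y =
          sqrt 2 * cocoercivity_gap F g y (x 0) + silver_ratio * cocoercivity_gap F g (x 0) (x 1)
          + cocoercivity_gap F g (x 1) (x 0)"
    unfolding x1 silver_ratio_def by (rule silver_potential_base) simp
  also have "\<dots> \<ge> 0"
    using Q silver_ratio_pos by simp
  finally show ?case
    by (simp add: silver_ratio_def)
next
  case (3 k)
  define s where "s = silver_sched (Suc k)"
  define n where "n = length s"
  define t where "t = silver_ratio ^ k"
  define x' where "x' i = x (n + 1 + i)" for i
  have "gd_trajectory g (s @ [1 + t] @ s) x"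
    using "3.prems"(2) unfolding s_def t_def by simp
  then have first: "gd_trajectory g s x" and middle: "gd_trajectory g [1 + t] (\<lambda>i. x (n + i))"
    and second: "gd_trajectory g s x'"
    unfolding gd_trajectory_append x'_def n_def by (simp_all add: add.assoc)
  have step: "x (n + 1) = x n - (1 + t) *\<^sub>R g (x n)"
    using middle by (simp add: gd_trajectory_def)
  have IH_first: "0 \<le> silver_potential F g (silver_ratio * t - 1) (x 0) (x n) y"
    using "3.IH"[OF _ first[unfolded s_def]] unfolding s_def n_def t_def by simp
  have IH_second: "0 \<le> silver_potential F g (silver_ratio * t - 1) (x (n + 1)) (x (n + 1 + n)) z"
    for z
    using "3.IH"[OF _ second[unfolded s_def]] unfolding s_def n_def t_def x'_def by simp
  have "silver_potential F g (silver_ratio * silver_ratio * t - 1) (x 0) (x (n + 1 + n)) y \<ge> 0"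
    unfolding silver_potential_join[OF silver_ratio_sq, where xn = "x n"] step[symmetric]
    using IH_first IH_second Q silver_ratio_pos
    by (simp add: t_def add_nonneg_nonneg)
  then show ?case
    unfolding s_def n_def t_def by (simp add: mult.assoc)
qed simp

theorem theorem4:
  fixes F :: "'a::euclidean_space \<Rightarrow> real"
    and gradF :: "'a \<Rightarrow> 'a"
    and xstar :: 'a
    and x :: "nat \<Rightarrow> 'a"
    and k :: nat
  assumes grad: "\<And>y. (F has_derivative (\<lambda>h. gradF y \<bullet> h)) (at y)"
    and cvx: "convex_on UNIV F"
    and smooth: "\<And>y z. norm (gradF y - gradF z) \<le> norm (y - z)"
    and minim: "\<And>y. F xstar \<le> F y"
    and k: "k \<ge> 1"
    and iter: "\<And>i. i < 2 ^ k - 1 \<Longrightarrow>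
                 x (Suc i) = x i - (silver_sched k ! i) *\<^sub>R gradF (x i)"
  shows "F (x (2 ^ k - 1)) - F xstar
           \<le> 1 / (4 * silver_ratio ^ k - 2) * (norm (x 0 - xstar))\<^sup>2"
proof -
  define S where "S = silver_ratio ^ k - 1"
  have Q: "0 \<le> cocoercivity_gap F gradF u v" for u v
    using convex_lipschitz_gradient_cocoercive[OF grad cvx smooth, of v u]
    unfolding cocoercivity_gap_def by (simp add: algebra_simps)
  have "gd_trajectory gradF (silver_sched k) x"
    using iter unfolding gd_trajectory_def length_silver_sched by blast
  from silver_potential_nonneg[OF Q k this]
  have "0 \<le> silver_potential F gradF S (x 0) (x (2 ^ k - 1)) xstar"
    unfolding S_def length_silver_sched .
  moreover have "0 \<le> S"
    unfolding S_def using silver_ratio_pos by (simp add: silver_ratio_def one_le_power)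
  ultimately have "(1 + 2 * S) * (F (x (2 ^ k - 1)) - F xstar) \<le> (norm (x 0 - xstar))\<^sup>2 / 2"
    using silver_potential_rate Q gradient_zero_at_minimum[OF grad minim] by blast
  moreover have "4 * silver_ratio ^ k - 2 = 2 * (1 + 2 * S)"
    unfolding S_def by simp
  ultimately show ?thesis
    using \<open>0 \<le> S\<close> by (simp add: field_simps)
qed

end
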